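(* Let $\mathcal{B}$ be a bounding family on $[n]^d$ and $f:[n]^d\to\mathbb{R}$. Then $f\in\mathcal{P}(\mathcal{B})$ if and only if $f(x)-f(y)\le d_{\mathcal{B}}(x,y)$ for all $x,y\in[n]^d$.
   Context: A bounding family is a tuple of $2d$ functions $l_1,u_1,\dots,l_d,u_d:[n-1]\to\mathbb{R}$ with $l_r(y)<u_r(y)$. $\mathcal{P}(\mathcal{B})$ is the set of $f:[n]^d\to\mathbb{R}$ with $l_r(x_r)\le f(x+\mathbf{e}_r)-f(x)\le u_r(x_r)$ for all $r\in[d]$ and $x$ with $x_r<n$. For $x,y\in[n]^d$, $$d_{\mathcal{B}}(x,y)=\sum_{r:x_r>y_r}\ \sum_{t=y_r}^{x_r-1}u_r(t)\ -\ \sum_{r:x_r<y_r}\ \sum_{t=x_r}^{y_r-1}l_r(t).$$ *)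

theory Defs
  imports "HOL-Analysis.Analysis"
begin

definition grid :: "nat \<Rightarrow> nat \<Rightarrow> (nat \<Rightarrow> nat) set" where
  "grid n d = {x. (\<forall>r\<in>{1..d}. x r \<in> {1..n}) \<and> (\<forall>r. r \<notin> {1..d} \<longrightarrow> x r = 0)}"

definition unitv :: "nat \<Rightarrow> nat \<Rightarrow> nat" where
  "unitv r = (\<lambda>s. if s = r then 1 else 0)"

definition shift :: "(nat \<Rightarrow> nat) \<Rightarrow> nat \<Rightarrow> nat \<Rightarrow> nat" where
  "shift x r = (\<lambda>s. x s + unitv r s)"

definition bounding_family :: "nat \<Rightarrow> nat \<Rightarrow> (nat \<Rightarrow> nat \<Rightarrow> real) \<Rightarrow> (nat \<Rightarrow> nat \<Rightarrow> real) \<Rightarrow> bool" where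
  "bounding_family n d l u \<longleftrightarrow> (\<forall>r\<in>{1..d}. \<forall>y\<in>{1..n-1}. l r y < u r y)"

definition PB :: "nat \<Rightarrow> nat \<Rightarrow> (nat \<Rightarrow> nat \<Rightarrow> real) \<Rightarrow> (nat \<Rightarrow> nat \<Rightarrow> real) \<Rightarrow> ((nat \<Rightarrow> nat) \<Rightarrow> real) set" where
  "PB n d l u = {f. \<forall>r\<in>{1..d}. \<forall>x\<in>grid n d. x r < n \<longrightarrow>
      l r (x r) \<le> f (shift x r) - f x \<and> f (shift x r) - f x \<le> u r (x r)}"

definition dB :: "nat \<Rightarrow> (nat \<Rightarrow> nat \<Rightarrow> real) \<Rightarrow> (nat \<Rightarrow> nat \<Rightarrow> real) \<Rightarrow> (nat \<Rightarrow> nat) \<Rightarrow> (nat \<Rightarrow> nat) \<Rightarrow> real" where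
  "dB d l u x y =
     (\<Sum>r\<in>{r\<in>{1..d}. x r > y r}. \<Sum>t\<in>{y r..x r - 1}. u r t)
   - (\<Sum>r\<in>{r\<in>{1..d}. x r < y r}. \<Sum>t\<in>{x r..y r - 1}. l r t)"

end

theory Submission
  imports Defs
begin

text \<open>For \<open>f \<in> P(\<B>)\<close>, walking from \<open>y\<close> to \<open>x\<close> one coordinate at a time and summing the
  one-step bounds gives \<open>f x - f y \<le> d\<^sub>\<B>(x, y)\<close>, since \<open>d\<^sub>\<B>\<close> is a sum of one-coordinate
  contributions. Conversely, for \<open>y = x + e\<^sub>r\<close> the distances \<open>d\<^sub>\<B>(y, x)\<close> and \<open>d\<^sub>\<B>(x, y)\<close> are
  exactly \<open>u\<^sub>r(x\<^sub>r)\<close> and \<open>-l\<^sub>r(x\<^sub>r)\<close>.\<close>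

definition coord_dist :: "(nat \<Rightarrow> nat \<Rightarrow> real) \<Rightarrow> (nat \<Rightarrow> nat \<Rightarrow> real) \<Rightarrow> nat \<Rightarrow> nat \<Rightarrow> nat \<Rightarrow> real"
  where "coord_dist l u r a b =
    (if b < a then (\<Sum>t\<in>{b..a - 1}. u r t) else 0) - (if a < b then (\<Sum>t\<in>{a..b - 1}. l r t) else 0)"

lemma dB_eq_sum_coord_dist: "dB d l u x y = (\<Sum>r\<in>{1..d}. coord_dist l u r (x r) (y r))"
  unfolding dB_def coord_dist_def
  by (simp add: sum_subtractf sum.inter_filter[symmetric])

lemma fun_upd_in_grid:
  assumes "x \<in> grid n d" "r \<in> {1..d}" "v \<in> {1..n}"
  shows "x(r := v) \<in> grid n d"
  using assms unfolding grid_def by auto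

lemma shift_fun_upd: "shift (x(r := v)) r = x(r := v + 1)"
  unfolding shift_def unitv_def by auto

lemma shift_eq_fun_upd: "shift x r = x(r := x r + 1)"
  using shift_fun_upd[of x r "x r"] by simp

lemma PB_coord_walk_bounds:
  assumes f: "f \<in> PB n d l u" and x: "x \<in> grid n d" and r: "r \<in> {1..d}" and k: "x r + k \<le> n"
  shows "(\<Sum>t\<in>{x r..<x r + k}. l r t) \<le> f (x(r := x r + k)) - f x
    \<and> f (x(r := x r + k)) - f x \<le> (\<Sum>t\<in>{x r..<x r + k}. u r t)"
  using k
proof (induction k)
  case 0
  then show ?case by simp
next
  case (Suc k)
  let ?z = "x(r := x r + k)"
  have "x r \<ge> 1" using x r unfolding grid_def by auto
  then have "?z \<in> grid n d" using fun_upd_in_grid[OF x r, of "x r + k"] Suc.prems by auto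
  moreover have "?z r < n" using Suc.prems by simp
  ultimately have step: "l r (x r + k) \<le> f (x(r := x r + Suc k)) - f ?z
      \<and> f (x(r := x r + Suc k)) - f ?z \<le> u r (x r + k)"
    using f r shift_fun_upd[of x r "x r + k"] unfolding PB_def by fastforce
  show ?case using step Suc.IH Suc.prems by (simp del: fun_upd_apply)
qed

lemma PB_fun_upd_diff_le:
  assumes f: "f \<in> PB n d l u" and x: "x \<in> grid n d" and r: "r \<in> {1..d}" and v: "v \<in> {1..n}"
  shows "f (x(r := v)) - f x \<le> coord_dist l u r v (x r)"
proof -
  consider "x r < v" | "v = x r" | "v < x r" by linarith
  then show ?thesis
  proof cases
    case 1
    then have "{x r..<x r + (v - x r)} = {x r..v - 1}" by auto
    with 1 v PB_coord_walk_bounds[OF f x r, of "v - x r"]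
    show ?thesis unfolding coord_dist_def by simp
  next
    case 2
    then show ?thesis unfolding coord_dist_def by simp
  next
    case 3
    let ?z = "x(r := v)"
    have "?z(r := ?z r + (x r - v)) = x" "{v..<v + (x r - v)} = {v..x r - 1}" using 3 by auto
    moreover have "x r \<le> n" using x r unfolding grid_def by auto
    ultimately show ?thesis
      using 3 PB_coord_walk_bounds[OF f fun_upd_in_grid[OF x r v] r, of "x r - v"]
      unfolding coord_dist_def by simp
  qed
qed

lemma PB_diff_le_dB:
  assumes f: "f \<in> PB n d l u" and x: "x \<in> grid n d" and y: "y \<in> grid n d"
  shows "f x - f y \<le> dB d l u x y"
proof -
  define z where "z m = (\<lambda>s. if s \<le> m then x s else y s)" for m
  have z_grid: "z m \<in> grid n d" for m using x y unfolding grid_def z_def by auto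
  have "f (z m) - f (z 0) \<le> (\<Sum>r\<in>{1..m}. coord_dist l u r (x r) (y r))" if "m \<le> d" for m
    using that
  proof (induction m)
    case 0
    then show ?case by simp
  next
    case (Suc m)
    have r: "Suc m \<in> {1..d}" using Suc.prems by simp
    then have "x (Suc m) \<in> {1..n}" using x unfolding grid_def by auto
    moreover have "z (Suc m) = (z m)(Suc m := x (Suc m))" "z m (Suc m) = y (Suc m)"
      unfolding z_def by auto
    ultimately have "f (z (Suc m)) - f (z m) \<le> coord_dist l u (Suc m) (x (Suc m)) (y (Suc m))"
      using PB_fun_upd_diff_le[OF f z_grid r] by metis
    then show ?case using Suc by simp
  qed
  moreover have "z d = x" "z 0 = y" using x y unfolding z_def grid_def by (auto simp: fun_eq_iff)
  ultimately show ?thesis by (metis dB_eq_sum_coord_dist order_refl)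
qed

lemma dB_shift_left:
  assumes "r \<in> {1..d}"
  shows "dB d l u (shift x r) x = u r (x r)"
proof -
  have "dB d l u (shift x r) x = (\<Sum>s\<in>{1..d}. if s = r then u r (x r) else 0)"
    unfolding dB_eq_sum_coord_dist shift_eq_fun_upd
    by (rule sum.cong) (auto simp: coord_dist_def)
  with assms show ?thesis by simp
qed

lemma dB_shift_right:
  assumes "r \<in> {1..d}"
  shows "dB d l u x (shift x r) = - l r (x r)"
proof -
  have "dB d l u x (shift x r) = (\<Sum>s\<in>{1..d}. if s = r then - l r (x r) else 0)"
    unfolding dB_eq_sum_coord_dist shift_eq_fun_upd
    by (rule sum.cong) (auto simp: coord_dist_def)
  with assms show ?thesis by simp
qed

lemma shift_in_grid:
  assumes "x \<in> grid n d" "r \<in> {1..d}" "x r < n"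
  shows "shift x r \<in> grid n d"
  using assms fun_upd_in_grid[of x n d r "x r + 1"] unfolding shift_eq_fun_upd by simp

theorem lemma2p2:
  fixes n d :: nat and l u :: "nat \<Rightarrow> nat \<Rightarrow> real" and f :: "(nat \<Rightarrow> nat) \<Rightarrow> real"
  assumes "bounding_family n d l u"
  shows "f \<in> PB n d l u \<longleftrightarrow> (\<forall>x\<in>grid n d. \<forall>y\<in>grid n d. f x - f y \<le> dB d l u x y)"
proof
  assume "f \<in> PB n d l u"
  then show "\<forall>x\<in>grid n d. \<forall>y\<in>grid n d. f x - f y \<le> dB d l u x y"
    using PB_diff_le_dB by blast
next
  assume le_dB: "\<forall>x\<in>grid n d. \<forall>y\<in>grid n d. f x - f y \<le> dB d l u x y"
  show "f \<in> PB n d l u"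
    unfolding PB_def
  proof (intro CollectI ballI impI)
    fix r x
    assume r: "r \<in> {1..d}" and x: "x \<in> grid n d" and "x r < n"
    then have "shift x r \<in> grid n d" by (intro shift_in_grid)
    with le_dB x have "f (shift x r) - f x \<le> dB d l u (shift x r) x"
      and "f x - f (shift x r) \<le> dB d l u x (shift x r)" by blast+
    then show "l r (x r) \<le> f (shift x r) - f x \<and> f (shift x r) - f x \<le> u r (x r)"
      unfolding dB_shift_left[OF r] dB_shift_right[OF r] by simp
  qed
qed

end
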